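(* Let $\Lambda=KQ/\langle I\rangle$ be a gentle algebra over an algebraically closed field $K$, let $\Gamma=KQ^{Aus}/\langle I^{Aus}\rangle$, and let $\Phi:\mathrm{mod}\,\Lambda\to\mathrm{mod}\,\Gamma$ and $\mathrm{res}:\mathrm{mod}\,\Gamma\to\mathrm{mod}\,\Lambda$ be the functors described in the context. Then: (i) For all $M\in\mathrm{mod}\,\Lambda$ and $N\in\mathrm{mod}\,\Gamma$, the maps $\mathrm{Hom}_\Gamma(\Phi(M),N)\xrightarrow{\mathrm{res}}\mathrm{Hom}_\Lambda(\mathrm{res}\,\Phi(M),\mathrm{res}\,N)\cong\mathrm{Hom}_\Lambda(M,\mathrm{res}\,N)$ and $\mathrm{Hom}_\Gamma(N,\Phi(M))\xrightarrow{\mathrm{res}}\mathrm{Hom}_\Lambda(\mathrm{res}\,N,\mathrm{res}\,\Phi(M))\cong\mathrm{Hom}_\Lambda(\mathrm{res}\,N,M)$ are injective (where the isomorphisms come from the natural isomorphism $\mathrm{res}\,\Phi(M)\cong M$). (ii) The functor $\Phi$ is fully faithful. In particular, $\Phi$ preserves injective and surjective morphisms.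
   Context: Conventions: arrows $\alpha:s(\alpha)\to t(\alpha)$; paths are composed right to left, so $\beta\alpha$ means $\alpha$ followed by $\beta$. A gentle algebra is $\Lambda=KQ/\langle I\rangle$ (finite dimensional) where $I$ is a set of length-$2$ paths such that: each vertex is the start of at most two and the end of at most two arrows; for each arrow $\alpha$ there is at most one arrow $\beta$ with $t(\beta)=s(\alpha)$, $\alpha\beta\notin I$, at most one $\gamma$ with $s(\gamma)=t(\alpha)$, $\gamma\alpha\notin I$, at most one $\beta$ with $t(\beta)=s(\alpha)$, $\alpha\beta\in I$, and at most one $\gamma$ with $s(\gamma)=t(\alpha)$, $\gamma\alpha\in I$. Modules are finite dimensional left modules, identified with representations $M=((M_i)_{i\in Q_0},(M_\alpha)_{\alpha\in Q_1})$ of $(Q,I)$. $\mathcal{C}(\Lambda)$ is the set of repetition-free cyclic paths $\alpha_1\cdots\alpha_n$ (up to cyclic permutation) with $\alpha_i\alpha_{i+1}\in I$ for all $i$ (indices mod $n$). $Q_1^{cyc}$ is the set of arrows lying on some cycle in $\mathcal{C}(\Lambda)$ and $Q_1^{ncyc}=Q_1\setminus Q_1^{cyc}$. The quiver $Q^{Aus}$ has vertex set $Q_0\sqcup Q_1^{cyc}$ and arrow set $Q_1^{ncyc}\sqcup\{\alpha^+:s(\alpha)\to\alpha\mid\alpha\in Q_1^{cyc}\}\sqcup\{\alpha^-:\alpha\to t(\alpha)\mid\alpha\in Q_1^{cyc}\}$; $I^{Aus}=\{\beta^+\alpha^-\mid\beta\alpha\in I,\ \alpha,\beta\in Q_1^{cyc}\}\cup\{\beta\alpha\mid\beta\alpha\in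 I,\ \alpha,\beta\in Q_1^{ncyc}\}$. The algebra $\Gamma=KQ^{Aus}/\langle I^{Aus}\rangle$ is (isomorphic to) the Cohen–Macaulay Auslander algebra of $\Lambda$. The functor $\Phi$: for $M\in\mathrm{mod}\,\Lambda$, $\Phi(M)=\widehat{M}$ has $\widehat{M}_i=M_i$ for $i\in Q_0$, $\widehat{M}_\alpha=\mathrm{Im}\,M_\alpha$ for $\alpha\in Q_1^{cyc}$, $\widehat{M}_\beta=M_\beta$ for $\beta\in Q_1^{ncyc}$, and $\widehat{M}_{\alpha^+}:M_{s(\alpha)}\to\mathrm{Im}\,M_\alpha$, $\widehat{M}_{\alpha^-}:\mathrm{Im}\,M_\alpha\to M_{t(\alpha)}$ the surjection and inclusion factoring $M_\alpha$; on morphisms $\Phi$ acts by the induced maps. The functor $\mathrm{res}$: for $N\in\mathrm{mod}\,\Gamma$, $(\mathrm{res}\,N)_i=N_i$ for $i\in Q_0$, $(\mathrm{res}\,N)_\alpha=N_\alpha$ for $\alpha\in Q_1^{ncyc}$, and $(\mathrm{res}\,N)_\alpha=N_{\alpha^-}N_{\alpha^+}$ for $\alpha\in Q_1^{cyc}$; on morphisms it keeps the components at vertices in $Q_0$. *)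

theory Defs
  imports Main "HOL-Computational_Algebra.Polynomial"
begin

(* A path of length 2 "beta alpha" (alpha followed by beta, t alpha = s beta) is
   encoded as the pair (beta, alpha). *)

definition algebraically_closed :: "'k::field itself \<Rightarrow> bool" where
  "algebraically_closed _ \<longleftrightarrow> (\<forall>p::'k poly. degree p > 0 \<longrightarrow> (\<exists>x. poly p x = 0))"

definition composable :: "('r \<Rightarrow> 'q) \<Rightarrow> ('r \<Rightarrow> 'q) \<Rightarrow> 'r list \<Rightarrow> bool" where
  "composable s t xs \<longleftrightarrow> (\<forall>i. Suc i < length xs \<longrightarrow> t (xs!i) = s (xs!Suc i))"

definition gentle :: "'q set \<Rightarrow> 'r set \<Rightarrow> ('r \<Rightarrow> 'q) \<Rightarrow> ('r \<Rightarrow> 'q) \<Rightarrow> ('r \<times> 'r) set \<Rightarrow> bool" where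
  "gentle Q0 Q1 s t I \<longleftrightarrow>
     finite Q0 \<and> finite Q1 \<and> (\<forall>a\<in>Q1. s a \<in> Q0 \<and> t a \<in> Q0) \<and>
     I \<subseteq> {(b, a). a \<in> Q1 \<and> b \<in> Q1 \<and> t a = s b} \<and>
     (\<forall>v\<in>Q0. card {a\<in>Q1. s a = v} \<le> 2 \<and> card {a\<in>Q1. t a = v} \<le> 2) \<and>
     (\<forall>a\<in>Q1. \<forall>b\<in>Q1. \<forall>b'\<in>Q1.
        t b = s a \<and> (a, b) \<notin> I \<and> t b' = s a \<and> (a, b') \<notin> I \<longrightarrow> b = b') \<and>
     (\<forall>a\<in>Q1. \<forall>c\<in>Q1. \<forall>c'\<in>Q1.
        s c = t a \<and> (c, a) \<notin> I \<and> s c' = t a \<and> (c', a) \<notin> I \<longrightarrow> c = c') \<and>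
     (\<forall>a\<in>Q1. \<forall>b\<in>Q1. \<forall>b'\<in>Q1.
        t b = s a \<and> (a, b) \<in> I \<and> t b' = s a \<and> (a, b') \<in> I \<longrightarrow> b = b') \<and>
     (\<forall>a\<in>Q1. \<forall>c\<in>Q1. \<forall>c'\<in>Q1.
        s c = t a \<and> (c, a) \<in> I \<and> s c' = t a \<and> (c', a) \<in> I \<longrightarrow> c = c') \<and>
     \<comment> \<open>finite dimensionality of KQ/<I>: paths avoiding I have bounded length\<close>
     (\<exists>N. \<forall>xs. length xs = N \<and> set xs \<subseteq> Q1 \<and> composable s t xs \<longrightarrow>
              (\<exists>i. Suc i < N \<and> (xs!Suc i, xs!i) \<in> I))"

(* Q1^cyc : arrows lying on some repetition-free cyclic path alpha_1 ... alpha_n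
   with alpha_i alpha_{i+1} in I (indices mod n); xs!i = alpha_{i+1}. *)
definition cyc_arrows :: "'r set \<Rightarrow> ('r \<times> 'r) set \<Rightarrow> 'r set" where
  "cyc_arrows Q1 I = {a. \<exists>xs. xs \<noteq> [] \<and> distinct xs \<and> set xs \<subseteq> Q1 \<and> a \<in> set xs \<and>
      (\<forall>i<length xs. (xs!i, xs!((i+1) mod length xs)) \<in> I)}"

(* arrows of Q^Aus: Old b (b in Q1^ncyc), Plus a = a^+, Minus a = a^- (a in Q1^cyc) *)
datatype 'r aus_arr = Old 'r | Plus 'r | Minus 'r

definition aus_Q0 :: "'q set \<Rightarrow> 'r set \<Rightarrow> ('r \<times> 'r) set \<Rightarrow> ('q + 'r) set" where
  "aus_Q0 Q0 Q1 I = Inl ` Q0 \<union> Inr ` cyc_arrows Q1 I"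

definition aus_Q1 :: "'r set \<Rightarrow> ('r \<times> 'r) set \<Rightarrow> 'r aus_arr set" where
  "aus_Q1 Q1 I = Old ` (Q1 - cyc_arrows Q1 I) \<union> Plus ` cyc_arrows Q1 I \<union> Minus ` cyc_arrows Q1 I"

fun aus_s :: "('r \<Rightarrow> 'q) \<Rightarrow> 'r aus_arr \<Rightarrow> 'q + 'r" where
  "aus_s s (Old b) = Inl (s b)"
| "aus_s s (Plus a) = Inl (s a)"
| "aus_s s (Minus a) = Inr a"

fun aus_t :: "('r \<Rightarrow> 'q) \<Rightarrow> 'r aus_arr \<Rightarrow> 'q + 'r" where
  "aus_t t (Old b) = Inl (t b)"
| "aus_t t (Plus a) = Inr a"
| "aus_t t (Minus a) = Inl (t a)"

definition aus_I :: "'r set \<Rightarrow> ('r \<times> 'r) set \<Rightarrow> ('r aus_arr \<times> 'r aus_arr) set" where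
  "aus_I Q1 I =
     {(Plus b, Minus a) | a b. (b, a) \<in> I \<and> a \<in> cyc_arrows Q1 I \<and> b \<in> cyc_arrows Q1 I} \<union>
     {(Old b, Old a) | a b. (b, a) \<in> I \<and> a \<in> Q1 - cyc_arrows Q1 I \<and> b \<in> Q1 - cyc_arrows Q1 I}"

definition lin_on :: "('k \<Rightarrow> 'v::plus \<Rightarrow> 'v) \<Rightarrow> ('k \<Rightarrow> 'w::plus \<Rightarrow> 'w) \<Rightarrow> 'v set \<Rightarrow> ('v \<Rightarrow> 'w) \<Rightarrow> bool"
  where "lin_on sV sW A g \<longleftrightarrow>
     (\<forall>x\<in>A. \<forall>y\<in>A. g (x + y) = g x + g y) \<and> (\<forall>c. \<forall>x\<in>A. g (sV c x) = sW c (g x))"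

(* finite dimensional representation (V, f) of the bound quiver (Q, I):
   V i is a finite dimensional subspace of the ambient vector space,
   f a a linear map V (s a) -> V (t a), satisfying the relations. *)
definition is_rep :: "('k::field \<Rightarrow> 'v::ab_group_add \<Rightarrow> 'v) \<Rightarrow> 'q set \<Rightarrow> 'r set \<Rightarrow>
    ('r \<Rightarrow> 'q) \<Rightarrow> ('r \<Rightarrow> 'q) \<Rightarrow> ('r \<times> 'r) set \<Rightarrow> ('q \<Rightarrow> 'v set) \<Rightarrow> ('r \<Rightarrow> 'v \<Rightarrow> 'v) \<Rightarrow> bool"
  where "is_rep sc Q0 Q1 s t I V f \<longleftrightarrow>
     (\<forall>i\<in>Q0. module.subspace sc (V i) \<and> (\<exists>B. finite B \<and> V i \<subseteq> module.span sc B)) \<and>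
     (\<forall>a\<in>Q1. f a ` V (s a) \<subseteq> V (t a) \<and> lin_on sc sc (V (s a)) (f a)) \<and>
     (\<forall>(b, a)\<in>I. \<forall>x\<in>V (s a). f b (f a x) = 0)"

(* morphisms of representations (V,f) -> (W,h); components are normalised to 0
   outside their domain so that the Hom-set is an honest set of functions *)
definition rep_hom :: "('k::field \<Rightarrow> 'v::ab_group_add \<Rightarrow> 'v) \<Rightarrow> ('k \<Rightarrow> 'w::ab_group_add \<Rightarrow> 'w) \<Rightarrow>
    'q set \<Rightarrow> 'r set \<Rightarrow> ('r \<Rightarrow> 'q) \<Rightarrow> ('r \<Rightarrow> 'q) \<Rightarrow>
    ('q \<Rightarrow> 'v set) \<Rightarrow> ('r \<Rightarrow> 'v \<Rightarrow> 'v) \<Rightarrow> ('q \<Rightarrow> 'w set) \<Rightarrow> ('r \<Rightarrow> 'w \<Rightarrow> 'w) \<Rightarrow>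
    ('q \<Rightarrow> 'v \<Rightarrow> 'w) set"
  where "rep_hom sV sW Q0 Q1 s t V f W h =
     {g. (\<forall>i\<in>Q0. g i ` V i \<subseteq> W i \<and> lin_on sV sW (V i) (g i)) \<and>
         (\<forall>a\<in>Q1. \<forall>x\<in>V (s a). g (t a) (f a x) = h a (g (s a) x)) \<and>
         (\<forall>i x. i \<notin> Q0 \<or> x \<notin> V i \<longrightarrow> g i x = 0)}"

definition Phi_V :: "('r \<Rightarrow> 'q) \<Rightarrow> ('q \<Rightarrow> 'v set) \<Rightarrow> ('r \<Rightarrow> 'v \<Rightarrow> 'v) \<Rightarrow> ('q + 'r) \<Rightarrow> 'v set" where
  "Phi_V s V f = (\<lambda>x. case x of Inl i \<Rightarrow> V i | Inr a \<Rightarrow> f a ` V (s a))"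

definition Phi_f :: "('r \<Rightarrow> 'v \<Rightarrow> 'v) \<Rightarrow> 'r aus_arr \<Rightarrow> 'v \<Rightarrow> 'v" where
  "Phi_f f = (\<lambda>c. case c of Old b \<Rightarrow> f b | Plus a \<Rightarrow> f a | Minus a \<Rightarrow> id)"

definition Phi_mor :: "'r set \<Rightarrow> ('r \<times> 'r) set \<Rightarrow> ('r \<Rightarrow> 'q) \<Rightarrow> ('r \<Rightarrow> 'q) \<Rightarrow>
    ('q \<Rightarrow> 'v set) \<Rightarrow> ('r \<Rightarrow> 'v \<Rightarrow> 'v) \<Rightarrow> ('q \<Rightarrow> 'v \<Rightarrow> 'w::zero) \<Rightarrow> ('q + 'r) \<Rightarrow> 'v \<Rightarrow> 'w" where
  "Phi_mor Q1 I s t V f g = (\<lambda>x. case x of Inl i \<Rightarrow> g i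
      | Inr a \<Rightarrow> (\<lambda>y. if a \<in> cyc_arrows Q1 I \<and> y \<in> f a ` V (s a) then g (t a) y else 0))"

definition res_V :: "(('q + 'r) \<Rightarrow> 'w set) \<Rightarrow> 'q \<Rightarrow> 'w set" where
  "res_V W = (\<lambda>i. W (Inl i))"

definition res_f :: "'r set \<Rightarrow> ('r \<times> 'r) set \<Rightarrow> ('r aus_arr \<Rightarrow> 'w \<Rightarrow> 'w) \<Rightarrow> 'r \<Rightarrow> 'w \<Rightarrow> 'w" where
  "res_f Q1 I h = (\<lambda>a. if a \<in> cyc_arrows Q1 I then h (Minus a) \<circ> h (Plus a) else h (Old a))"

definition res_mor :: "(('q + 'r) \<Rightarrow> 'v \<Rightarrow> 'w) \<Rightarrow> 'q \<Rightarrow> 'v \<Rightarrow> 'w" where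
  "res_mor g = (\<lambda>i. g (Inl i))"

end

theory Submission
  imports Defs
begin

text \<open>
  The new vertices of the Auslander quiver are the cyclic arrows \<open>\<alpha>\<close>; at such a vertex \<open>\<Phi>(M)\<close>
  carries \<open>Im M\<^sub>\<alpha>\<close>, reached from the space at \<open>s(\<alpha>)\<close> by the surjection \<open>\<alpha>\<^sup>+\<close> and embedded
  into the space at \<open>t(\<alpha>)\<close> by the inclusion \<open>\<alpha>\<^sup>-\<close>. Hence a morphism out of \<open>\<Phi>(M)\<close> is
  determined at \<open>\<alpha>\<close> by its component at \<open>s(\<alpha>)\<close>, and a morphism into \<open>\<Phi>(M)\<close> by its component
  at \<open>t(\<alpha>)\<close>, so \<open>res\<close> is injective on both Hom-sets. Conversely, commutativity shows that a
  morphism \<open>g : M \<rightarrow> M'\<close> maps \<open>Im M\<^sub>\<alpha>\<close> into \<open>Im M'\<^sub>\<alpha>\<close>; restricting \<open>g\<close> there inverts \<open>res\<close>,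
  so \<open>\<Phi>\<close> is fully faithful. Neither the field being algebraically closed nor the gentle
  relations play a role.
\<close>

lemma cyc_arrows_in: "a \<in> cyc_arrows Q1 I \<Longrightarrow> a \<in> Q1"
  unfolding cyc_arrows_def by blast

lemma aus_Q0_Inl_iff [simp]: "Inl i \<in> aus_Q0 Q0 Q1 I \<longleftrightarrow> i \<in> Q0"
  and aus_Q0_Inr_iff [simp]: "Inr a \<in> aus_Q0 Q0 Q1 I \<longleftrightarrow> a \<in> cyc_arrows Q1 I"
  unfolding aus_Q0_def by auto

lemma aus_Q1_Old_iff [simp]: "Old b \<in> aus_Q1 Q1 I \<longleftrightarrow> b \<in> Q1 \<and> b \<notin> cyc_arrows Q1 I"
  and aus_Q1_Plus_iff [simp]: "Plus b \<in> aus_Q1 Q1 I \<longleftrightarrow> b \<in> cyc_arrows Q1 I"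
  and aus_Q1_Minus_iff [simp]: "Minus b \<in> aus_Q1 Q1 I \<longleftrightarrow> b \<in> cyc_arrows Q1 I"
  unfolding aus_Q1_def by auto

lemma Phi_V_Inl [simp]: "Phi_V s V f (Inl i) = V i"
  and Phi_V_Inr [simp]: "Phi_V s V f (Inr a) = f a ` V (s a)"
  unfolding Phi_V_def by auto

lemma Phi_f_simps [simp]: "Phi_f f (Old b) = f b" "Phi_f f (Plus b) = f b" "Phi_f f (Minus b) = id"
  unfolding Phi_f_def by auto

lemma Phi_mor_Inl [simp]: "Phi_mor Q1 I s t V f g (Inl i) = g i"
  unfolding Phi_mor_def by simp

lemma Phi_mor_Inr:
  "Phi_mor Q1 I s t V f g (Inr a) y = (if a \<in> cyc_arrows Q1 I \<and> y \<in> f a ` V (s a) then g (t a) y else 0)"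
  unfolding Phi_mor_def by simp

lemma image_Phi_mor_Inr [simp]:
  "a \<in> cyc_arrows Q1 I \<Longrightarrow> Phi_mor Q1 I s t V f g (Inr a) ` f a ` V (s a) = g (t a) ` f a ` V (s a)"
  by (auto simp: Phi_mor_Inr)

lemma res_V_Phi_V [simp]: "res_V (Phi_V s V f) = V"
  unfolding res_V_def by auto

lemma res_f_Phi_f [simp]: "res_f Q1 I (Phi_f f) = f"
  unfolding res_f_def by auto

lemma res_mor_Phi_mor [simp]: "res_mor (Phi_mor Q1 I s t V f g) = g"
  unfolding res_mor_def by auto

lemma rep_homD:
  assumes "g \<in> rep_hom sV sW Q0 Q1 s t V f W h"
  shows rep_hom_image: "\<And>i. i \<in> Q0 \<Longrightarrow> g i ` V i \<subseteq> W i"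
    and rep_hom_lin_on: "\<And>i. i \<in> Q0 \<Longrightarrow> lin_on sV sW (V i) (g i)"
    and rep_hom_commute: "\<And>a x. a \<in> Q1 \<Longrightarrow> x \<in> V (s a) \<Longrightarrow> g (t a) (f a x) = h a (g (s a) x)"
    and rep_hom_outside: "\<And>i x. i \<notin> Q0 \<or> x \<notin> V i \<Longrightarrow> g i x = 0"
  using assms unfolding rep_hom_def by auto

lemma is_repD:
  assumes "is_rep sc Q0 Q1 s t I V f"
  shows is_rep_subspace: "\<And>i. i \<in> Q0 \<Longrightarrow> module.subspace sc (V i)"
    and is_rep_image: "\<And>a. a \<in> Q1 \<Longrightarrow> f a ` V (s a) \<subseteq> V (t a)"
    and is_rep_lin_on: "\<And>a. a \<in> Q1 \<Longrightarrow> lin_on sc sc (V (s a)) (f a)"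
  using assms unfolding is_rep_def by blast+

lemma lin_on_zero:
  fixes F :: "'v::ab_group_add \<Rightarrow> 'w::ab_group_add"
  assumes "lin_on sV sW A F" "0 \<in> A"
  shows "F 0 = 0"
  using assms unfolding lin_on_def by (metis add.right_neutral add_left_imp_eq)

lemma vector_space_module: "vector_space sc \<Longrightarrow> module sc"
  unfolding vector_space_def module_def .

lemma subspace_image_lin_on:
  fixes F :: "'v::ab_group_add \<Rightarrow> 'w::ab_group_add"
  assumes "module sV" "module sW" and lin: "lin_on sV sW A F" and A: "module.subspace sV A"
  shows "module.subspace sW (F ` A)"
proof -
  have A0: "0 \<in> A" and A_add: "\<And>x y. x \<in> A \<Longrightarrow> y \<in> A \<Longrightarrow> x + y \<in> A"
    and A_scale: "\<And>c x. x \<in> A \<Longrightarrow> sV c x \<in> A"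
    using A module.subspace_def[OF \<open>module sV\<close>] by auto
  have F_add: "\<And>x y. x \<in> A \<Longrightarrow> y \<in> A \<Longrightarrow> F (x + y) = F x + F y"
    and F_scale: "\<And>c x. x \<in> A \<Longrightarrow> F (sV c x) = sW c (F x)"
    using lin unfolding lin_on_def by auto
  have "F 0 \<in> F ` A" using A0 by blast
  then have "0 \<in> F ` A" using lin_on_zero[OF lin A0] by simp
  moreover have "F x + F y \<in> F ` A" if "x \<in> A" "y \<in> A" for x y
    using F_add[OF that] A_add[OF that] by (metis imageI)
  moreover have "sW c (F x) \<in> F ` A" if "x \<in> A" for c x
    using F_scale[OF that] A_scale[OF that] by (metis imageI)
  ultimately show ?thesis
    unfolding module.subspace_def[OF \<open>module sW\<close>] by blast
qed

lemma lin_on_subset: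
  assumes "module sV" "lin_on sV sW A F" and B: "module.subspace sV B" "B \<subseteq> A"
    and "\<And>x. x \<in> B \<Longrightarrow> G x = F x"
  shows "lin_on sV sW B G"
proof -
  have "x + y \<in> B" "sV c x \<in> B" if "x \<in> B" "y \<in> B" for x y c
    using B that module.subspace_def[OF \<open>module sV\<close>] by auto
  then show ?thesis
    using assms unfolding lin_on_def by (simp add: subset_iff)
qed

lemma gentle_arrow_ends: "gentle Q0 Q1 s t I \<Longrightarrow> \<forall>a\<in>Q1. s a \<in> Q0 \<and> t a \<in> Q0"
  unfolding gentle_def by (elim conjE)

abbreviation aus_rep_hom ::
    "('k::field \<Rightarrow> 'v::ab_group_add \<Rightarrow> 'v) \<Rightarrow> ('k \<Rightarrow> 'w::ab_group_add \<Rightarrow> 'w) \<Rightarrow> 'q set \<Rightarrow> 'r set \<Rightarrow> ('r \<Rightarrow> 'q) \<Rightarrow> ('r \<Rightarrow> 'q) \<Rightarrow>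
      ('r \<times> 'r) set \<Rightarrow> ('q + 'r \<Rightarrow> 'v set) \<Rightarrow> ('r aus_arr \<Rightarrow> 'v \<Rightarrow> 'v) \<Rightarrow>
      ('q + 'r \<Rightarrow> 'w set) \<Rightarrow> ('r aus_arr \<Rightarrow> 'w \<Rightarrow> 'w) \<Rightarrow> ('q + 'r \<Rightarrow> 'v \<Rightarrow> 'w) set"
  where
  "aus_rep_hom sV sW Q0 Q1 s t I \<equiv> rep_hom sV sW (aus_Q0 Q0 Q1 I) (aus_Q1 Q1 I) (aus_s s) (aus_t t)"

lemma rep_hom_eqI:
  assumes "G1 \<in> rep_hom sV sW Q0 Q1 s t V f W h" "G2 \<in> rep_hom sV sW Q0 Q1 s t V f W h"
    and "\<And>i x. i \<in> Q0 \<Longrightarrow> x \<in> V i \<Longrightarrow> G1 i x = G2 i x"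
  shows "G1 = G2"
proof (intro ext)
  fix i x
  show "G1 i x = G2 i x"
    using assms(3) rep_hom_outside[OF assms(1), of i x] rep_hom_outside[OF assms(2), of i x]
    by (cases "i \<in> Q0 \<and> x \<in> V i") auto
qed

lemma res_mor_rep_hom_from_Phi:
  assumes G: "G \<in> aus_rep_hom sV sW Q0 Q1 s t I (Phi_V s V f) (Phi_f f) W h"
  shows "res_mor G \<in> rep_hom sV sW Q0 Q1 s t V f (res_V W) (res_f Q1 I h)"
proof -
  have "res_mor G (t a) (f a x) = res_f Q1 I h a (res_mor G (s a) x)" if "a \<in> Q1" "x \<in> V (s a)" for a x
  proof (cases "a \<in> cyc_arrows Q1 I")
    case True
    then have "G (Inr a) (f a x) = h (Plus a) (G (Inl (s a)) x)"
      and "G (Inl (t a)) (f a x) = h (Minus a) (G (Inr a) (f a x))"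
      using rep_hom_commute[OF G, of "Plus a" x] rep_hom_commute[OF G, of "Minus a" "f a x"] that
      by auto
    with True show ?thesis by (simp add: res_mor_def res_f_def)
  next
    case False
    then show ?thesis
      using rep_hom_commute[OF G, of "Old a" x] that by (simp add: res_mor_def res_f_def)
  qed
  moreover have "res_mor G i ` V i \<subseteq> res_V W i" "lin_on sV sW (V i) (res_mor G i)" if "i \<in> Q0" for i
    using rep_hom_image[OF G, of "Inl i"] rep_hom_lin_on[OF G, of "Inl i"] that
    by (simp_all add: res_mor_def res_V_def)
  moreover have "res_mor G i x = 0" if "i \<notin> Q0 \<or> x \<notin> V i" for i x
    using rep_hom_outside[OF G, of "Inl i" x] that by (simp add: res_mor_def)
  ultimately show ?thesis
    unfolding rep_hom_def by blast
qed

lemma inj_on_res_mor_from_Phi: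
  "inj_on res_mor (aus_rep_hom sV sW Q0 Q1 s t I (Phi_V s V f) (Phi_f f) W h)"
proof (rule inj_onI)
  fix G1 G2
  assume G1: "G1 \<in> aus_rep_hom sV sW Q0 Q1 s t I (Phi_V s V f) (Phi_f f) W h"
    and G2: "G2 \<in> aus_rep_hom sV sW Q0 Q1 s t I (Phi_V s V f) (Phi_f f) W h"
    and eq: "res_mor G1 = res_mor G2"
  then have Inl_eq: "G1 (Inl i) = G2 (Inl i)" for i
    unfolding res_mor_def by metis
  show "G1 = G2"
  proof (rule rep_hom_eqI[OF G1 G2])
    fix x y assume x: "x \<in> aus_Q0 Q0 Q1 I" and y: "y \<in> Phi_V s V f x"
    show "G1 x y = G2 x y"
    proof (cases x)
      case (Inr a)
      with x y obtain z where a: "a \<in> cyc_arrows Q1 I" and z: "z \<in> V (s a)" "y = f a z"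
        by auto
      then show ?thesis
        using rep_hom_commute[OF G1, of "Plus a" z] rep_hom_commute[OF G2, of "Plus a" z] Inr Inl_eq
        by simp
    qed (simp add: Inl_eq)
  qed
qed

lemma res_mor_rep_hom_to_Phi:
  assumes N: "is_rep sW (aus_Q0 Q0 Q1 I) (aus_Q1 Q1 I) (aus_s s) (aus_t t) (aus_I Q1 I) W h"
    and G: "G \<in> aus_rep_hom sW sV Q0 Q1 s t I W h (Phi_V s V f) (Phi_f f)"
  shows "res_mor G \<in> rep_hom sW sV Q0 Q1 s t (res_V W) (res_f Q1 I h) V f"
proof -
  have "res_mor G (t a) (res_f Q1 I h a x) = f a (res_mor G (s a) x)"
    if "a \<in> Q1" "x \<in> res_V W (s a)" for a x
  proof (cases "a \<in> cyc_arrows Q1 I")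
    case True
    have x: "x \<in> W (Inl (s a))" using that(2) unfolding res_V_def .
    have "h (Plus a) x \<in> W (Inr a)"
      using is_rep_image[OF N, of "Plus a"] True x by auto
    then have "G (Inl (t a)) (h (Minus a) (h (Plus a) x)) = G (Inr a) (h (Plus a) x)"
      using rep_hom_commute[OF G, of "Minus a" "h (Plus a) x"] True by simp
    moreover have "G (Inr a) (h (Plus a) x) = f a (G (Inl (s a)) x)"
      using rep_hom_commute[OF G, of "Plus a" x] True x by simp
    ultimately show ?thesis
      using True by (simp add: res_mor_def res_f_def)
  next
    case False
    then show ?thesis
      using rep_hom_commute[OF G, of "Old a" x] that by (simp add: res_mor_def res_f_def res_V_def)
  qed
  moreover have "res_mor G i ` res_V W i \<subseteq> V i" "lin_on sW sV (res_V W i) (res_mor G i)"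
    if "i \<in> Q0" for i
    using rep_hom_image[OF G, of "Inl i"] rep_hom_lin_on[OF G, of "Inl i"] that
    by (simp_all add: res_mor_def res_V_def)
  moreover have "res_mor G i x = 0" if "i \<notin> Q0 \<or> x \<notin> res_V W i" for i x
    using rep_hom_outside[OF G, of "Inl i" x] that by (simp add: res_mor_def res_V_def)
  ultimately show ?thesis
    unfolding rep_hom_def by blast
qed

lemma inj_on_res_mor_to_Phi:
  "inj_on res_mor (aus_rep_hom sW sV Q0 Q1 s t I W h (Phi_V s V f) (Phi_f f))"
proof (rule inj_onI)
  fix G1 G2
  assume G1: "G1 \<in> aus_rep_hom sW sV Q0 Q1 s t I W h (Phi_V s V f) (Phi_f f)"
    and G2: "G2 \<in> aus_rep_hom sW sV Q0 Q1 s t I W h (Phi_V s V f) (Phi_f f)"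
    and eq: "res_mor G1 = res_mor G2"
  then have Inl_eq: "G1 (Inl i) = G2 (Inl i)" for i
    unfolding res_mor_def by metis
  show "G1 = G2"
  proof (rule rep_hom_eqI[OF G1 G2])
    fix x y assume x: "x \<in> aus_Q0 Q0 Q1 I" and y: "y \<in> W x"
    show "G1 x y = G2 x y"
    proof (cases x)
      case (Inr a)
      then show ?thesis
        using rep_hom_commute[OF G1, of "Minus a" y] rep_hom_commute[OF G2, of "Minus a" y]
          x y Inl_eq by simp
    qed (simp add: Inl_eq)
  qed
qed

lemma rep_hom_maps_arrow_image:
  assumes g: "g \<in> rep_hom sV sU Q0 Q1 s t V f V' f'" and a: "a \<in> Q1" "s a \<in> Q0"
  shows "g (t a) ` f a ` V (s a) \<subseteq> f' a ` V' (s a)"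
proof
  fix y assume "y \<in> g (t a) ` f a ` V (s a)"
  then obtain z where z: "z \<in> V (s a)" and y: "y = g (t a) (f a z)" by blast
  have "y = f' a (g (s a) z)" using rep_hom_commute[OF g a(1) z] y by simp
  moreover have "g (s a) z \<in> V' (s a)" using rep_hom_image[OF g a(2)] z by blast
  ultimately show "y \<in> f' a ` V' (s a)" by blast
qed

lemma lin_on_Phi_mor_Inr:
  assumes "module sV" and ends: "\<forall>a\<in>Q1. s a \<in> Q0 \<and> t a \<in> Q0"
    and M: "is_rep sV Q0 Q1 s t I V f"
    and g: "g \<in> rep_hom sV sU Q0 Q1 s t V f V' f'"
    and a_cyc: "a \<in> cyc_arrows Q1 I"
  shows "lin_on sV sU (f a ` V (s a)) (Phi_mor Q1 I s t V f g (Inr a))"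
proof -
  have a: "a \<in> Q1" using a_cyc by (rule cyc_arrows_in)
  then have sa: "s a \<in> Q0" and ta: "t a \<in> Q0" using ends by auto
  have "module.subspace sV (f a ` V (s a))"
    using subspace_image_lin_on[OF \<open>module sV\<close> \<open>module sV\<close> is_rep_lin_on[OF M a]
        is_rep_subspace[OF M sa]] .
  then show ?thesis
    by (rule lin_on_subset[OF \<open>module sV\<close> rep_hom_lin_on[OF g ta] _ is_rep_image[OF M a]])
      (simp add: Phi_mor_Inr a_cyc)
qed

lemma Phi_mor_rep_hom:
  assumes "module sV" and ends: "\<forall>a\<in>Q1. s a \<in> Q0 \<and> t a \<in> Q0"
    and M: "is_rep sV Q0 Q1 s t I V f"
    and g: "g \<in> rep_hom sV sU Q0 Q1 s t V f V' f'"
  shows "Phi_mor Q1 I s t V f g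
    \<in> aus_rep_hom sV sU Q0 Q1 s t I (Phi_V s V f) (Phi_f f) (Phi_V s V' f') (Phi_f f')"
  unfolding rep_hom_def
proof (intro CollectI conjI ballI allI impI)
  fix x assume x: "x \<in> aus_Q0 Q0 Q1 I"
  show "Phi_mor Q1 I s t V f g x ` Phi_V s V f x \<subseteq> Phi_V s V' f' x"
  proof (cases x)
    case (Inr a)
    with x have a: "a \<in> cyc_arrows Q1 I" by simp
    moreover have "a \<in> Q1" using a by (rule cyc_arrows_in)
    ultimately show ?thesis using rep_hom_maps_arrow_image[OF g] ends Inr by simp
  qed (use x rep_hom_image[OF g] in auto)
  show "lin_on sV sU (Phi_V s V f x) (Phi_mor Q1 I s t V f g x)"
  proof (cases x)
    case (Inr a)
    with x have a: "a \<in> cyc_arrows Q1 I" by simp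
    then show ?thesis using lin_on_Phi_mor_Inr[OF assms a] Inr by simp
  qed (use x rep_hom_lin_on[OF g] in auto)
next
  fix c y assume c: "c \<in> aus_Q1 Q1 I" and y: "y \<in> Phi_V s V f (aus_s s c)"
  show "Phi_mor Q1 I s t V f g (aus_t t c) (Phi_f f c y)
      = Phi_f f' c (Phi_mor Q1 I s t V f g (aus_s s c) y)"
  proof (cases c)
    case (Plus a)
    then have "a \<in> Q1" using c by (auto intro: cyc_arrows_in)
    then show ?thesis using Plus c y rep_hom_commute[OF g] by (auto simp: Phi_mor_Inr)
  qed (use c y rep_hom_commute[OF g] in \<open>auto simp: Phi_mor_Inr\<close>)
next
  fix x y assume "x \<notin> aus_Q0 Q0 Q1 I \<or> y \<notin> Phi_V s V f x"
  then show "Phi_mor Q1 I s t V f g x y = 0"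
    using rep_hom_outside[OF g] by (cases x) (auto simp: Phi_mor_Inr)
qed

lemma Phi_mor_res_mor:
  assumes G: "G \<in> aus_rep_hom sV sU Q0 Q1 s t I (Phi_V s V f) (Phi_f f) (Phi_V s V' f') (Phi_f f')"
  shows "Phi_mor Q1 I s t V f (res_mor G) = G"
proof (intro ext)
  fix x y
  show "Phi_mor Q1 I s t V f (res_mor G) x y = G x y"
  proof (cases x)
    case (Inr a)
    show ?thesis
    proof (cases "a \<in> cyc_arrows Q1 I \<and> y \<in> f a ` V (s a)")
      case True
      then show ?thesis
        using rep_hom_commute[OF G, of "Minus a" y] Inr by (simp add: Phi_mor_Inr res_mor_def)
    next
      case False
      then show ?thesis
        using rep_hom_outside[OF G, of x y] Inr by (auto simp: Phi_mor_Inr)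
    qed
  qed (simp add: res_mor_def)
qed

lemma bij_betw_Phi_mor:
  assumes "module sV" and "\<forall>a\<in>Q1. s a \<in> Q0 \<and> t a \<in> Q0" and "is_rep sV Q0 Q1 s t I V f"
  shows "bij_betw (Phi_mor Q1 I s t V f) (rep_hom sV sU Q0 Q1 s t V f V' f')
    (aus_rep_hom sV sU Q0 Q1 s t I (Phi_V s V f) (Phi_f f) (Phi_V s V' f') (Phi_f f'))"
proof (rule bij_betw_byWitness[where f' = res_mor])
  show "Phi_mor Q1 I s t V f ` rep_hom sV sU Q0 Q1 s t V f V' f'
    \<subseteq> aus_rep_hom sV sU Q0 Q1 s t I (Phi_V s V f) (Phi_f f) (Phi_V s V' f') (Phi_f f')"
    using Phi_mor_rep_hom[OF assms] by blast
  show "res_mor ` aus_rep_hom sV sU Q0 Q1 s t I (Phi_V s V f) (Phi_f f) (Phi_V s V' f') (Phi_f f')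
    \<subseteq> rep_hom sV sU Q0 Q1 s t V f V' f'"
    using res_mor_rep_hom_from_Phi[where W = "Phi_V s V' f'" and h = "Phi_f f'"] by auto
qed (simp_all add: Phi_mor_res_mor)

lemma Phi_mor_inj_on:
  assumes ends: "\<forall>a\<in>Q1. s a \<in> Q0 \<and> t a \<in> Q0" and M: "is_rep sV Q0 Q1 s t I V f"
    and inj: "\<forall>i\<in>Q0. inj_on (g i) (V i)" and x: "x \<in> aus_Q0 Q0 Q1 I"
  shows "inj_on (Phi_mor Q1 I s t V f g x) (Phi_V s V f x)"
proof (cases x)
  case (Inr a)
  with x have a: "a \<in> cyc_arrows Q1 I" by simp
  then have "a \<in> Q1" by (rule cyc_arrows_in)
  then have "inj_on (g (t a)) (f a ` V (s a))"
    using inj ends is_rep_image[OF M] by (meson inj_on_subset)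
  then show ?thesis
    using a Inr by (auto simp: Phi_mor_Inr intro: inj_on_cong[THEN iffD1])
qed (use inj x in simp)

lemma Phi_mor_image:
  assumes ends: "\<forall>a\<in>Q1. s a \<in> Q0 \<and> t a \<in> Q0" and g: "g \<in> rep_hom sV sU Q0 Q1 s t V f V' f'"
    and surj: "\<forall>i\<in>Q0. g i ` V i = V' i" and x: "x \<in> aus_Q0 Q0 Q1 I"
  shows "Phi_mor Q1 I s t V f g x ` Phi_V s V f x = Phi_V s V' f' x"
proof (cases x)
  case (Inr a)
  with x have a: "a \<in> cyc_arrows Q1 I" by simp
  then have "a \<in> Q1" by (rule cyc_arrows_in)
  have "Phi_mor Q1 I s t V f g (Inr a) ` f a ` V (s a) = g (t a) ` f a ` V (s a)"
    using a by simp
  also have "\<dots> = f' a ` g (s a) ` V (s a)"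
    using rep_hom_commute[OF g \<open>a \<in> Q1\<close>] by (auto simp: image_iff)
  also have "\<dots> = f' a ` V' (s a)"
    using surj ends \<open>a \<in> Q1\<close> by simp
  finally show ?thesis using Inr by simp
qed (use surj x in simp)

theorem lemma3p3:
  fixes Q0 :: "'q set" and Q1 :: "'r set" and s t :: "'r \<Rightarrow> 'q" and I :: "('r \<times> 'r) set"
    and scV :: "'k::field \<Rightarrow> 'v::ab_group_add \<Rightarrow> 'v"
    and scW :: "'k \<Rightarrow> 'w::ab_group_add \<Rightarrow> 'w"
    and scU :: "'k \<Rightarrow> 'u::ab_group_add \<Rightarrow> 'u"
    and V :: "'q \<Rightarrow> 'v set" and f :: "'r \<Rightarrow> 'v \<Rightarrow> 'v"
    and V' :: "'q \<Rightarrow> 'u set" and f' :: "'r \<Rightarrow> 'u \<Rightarrow> 'u"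
    and W :: "('q + 'r) \<Rightarrow> 'w set" and h :: "'r aus_arr \<Rightarrow> 'w \<Rightarrow> 'w"
  assumes K: "algebraically_closed TYPE('k)"
    and gentle: "gentle Q0 Q1 s t I"
    and vsV: "vector_space scV" and vsW: "vector_space scW" and vsU: "vector_space scU"
    and M: "is_rep scV Q0 Q1 s t I V f"
    and M': "is_rep scU Q0 Q1 s t I V' f'"
    and N: "is_rep scW (aus_Q0 Q0 Q1 I) (aus_Q1 Q1 I) (aus_s s) (aus_t t) (aus_I Q1 I) W h"
  shows
    "(res_mor ` rep_hom scV scW (aus_Q0 Q0 Q1 I) (aus_Q1 Q1 I) (aus_s s) (aus_t t)
                  (Phi_V s V f) (Phi_f f) W h
       \<subseteq> rep_hom scV scW Q0 Q1 s t (res_V (Phi_V s V f)) (res_f Q1 I (Phi_f f)) (res_V W) (res_f Q1 I h)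
     \<and> res_V (Phi_V s V f) = V \<and> res_f Q1 I (Phi_f f) = f
     \<and> inj_on res_mor (rep_hom scV scW (aus_Q0 Q0 Q1 I) (aus_Q1 Q1 I) (aus_s s) (aus_t t)
                  (Phi_V s V f) (Phi_f f) W h))
     \<comment> \<open>(i), first map: Hom(Phi M, N) -> Hom(res Phi M, res N) = Hom(M, res N) is injective\<close>
     \<and> (res_mor ` rep_hom scW scV (aus_Q0 Q0 Q1 I) (aus_Q1 Q1 I) (aus_s s) (aus_t t)
                  W h (Phi_V s V f) (Phi_f f)
       \<subseteq> rep_hom scW scV Q0 Q1 s t (res_V W) (res_f Q1 I h) (res_V (Phi_V s V f)) (res_f Q1 I (Phi_f f))
     \<and> inj_on res_mor (rep_hom scW scV (aus_Q0 Q0 Q1 I) (aus_Q1 Q1 I) (aus_s s) (aus_t t)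
                  W h (Phi_V s V f) (Phi_f f)))
     \<comment> \<open>(i), second map: Hom(N, Phi M) -> Hom(res N, res Phi M) = Hom(res N, M) is injective\<close>
     \<and> (bij_betw (Phi_mor Q1 I s t V f) (rep_hom scV scU Q0 Q1 s t V f V' f')
        (rep_hom scV scU (aus_Q0 Q0 Q1 I) (aus_Q1 Q1 I) (aus_s s) (aus_t t)
           (Phi_V s V f) (Phi_f f) (Phi_V s V' f') (Phi_f f')))
     \<comment> \<open>(ii) Phi is fully faithful\<close>
     \<and> (\<forall>g\<in>rep_hom scV scU Q0 Q1 s t V f V' f'.
        (\<forall>i\<in>Q0. inj_on (g i) (V i)) \<longrightarrow>
        (\<forall>x\<in>aus_Q0 Q0 Q1 I. inj_on (Phi_mor Q1 I s t V f g x) (Phi_V s V f x)))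
     \<comment> \<open>(ii) Phi preserves injective morphisms\<close>
     \<and> (\<forall>g\<in>rep_hom scV scU Q0 Q1 s t V f V' f'.
        (\<forall>i\<in>Q0. g i ` V i = V' i) \<longrightarrow>
        (\<forall>x\<in>aus_Q0 Q0 Q1 I. Phi_mor Q1 I s t V f g x ` Phi_V s V f x = Phi_V s V' f' x))
     \<comment> \<open>(ii) Phi preserves surjective morphisms\<close>"
proof -
  have ends: "\<forall>a\<in>Q1. s a \<in> Q0 \<and> t a \<in> Q0"
    using gentle by (rule gentle_arrow_ends)
  have "module scV"
    using vsV by (rule vector_space_module)
  show ?thesis
    by (intro conjI image_subsetI ballI impI)
      (simp_all add: res_mor_rep_hom_from_Phi res_mor_rep_hom_to_Phi[OF N]
        inj_on_res_mor_from_Phi inj_on_res_mor_to_Phi bij_betw_Phi_mor[OF \<open>module scV\<close> ends M]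
        Phi_mor_inj_on[OF ends M] Phi_mor_image[OF ends])
qed

end
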